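(* Let $\mathcal{S}$ be the STAIR code with inside global parity symbols as defined in the context. Then: (a) the map sending $X\in\mathcal{S}$ to its entries at the data positions is a bijection from $\mathcal{S}$ onto $\mathbb{F}^{r(n-m)-s}$; that is, for every assignment of data symbols to the data positions there is exactly one array in $\mathcal{S}$ with those data symbols (so the inside global parity symbols and row parity symbols are uniquely determined, and in particular upstairs and downstairs encoding yield the same values); (b) $\mathcal{S}$ tolerates the following failures: let $F\subseteq\{0,\dots,n-1\}$ with $|F|\le m$, and for each $j\notin F$ let $L_j\subseteq\{0,\dots,r-1\}$, such that the number $t$ of $j\notin F$ with $L_j\ne\emptyset$ satisfies $t\le m'$ and the sorted nonzero sizes $f_0\le\cdots\le f_{t-1}$ of these $L_j$ satisfy $f_{t-1-i}\le e_{m'-1-i}$ for $0\le i\le t-1$. Then every $X\in\mathcal{S}$ is uniquely determined within $\mathcal{S}$ by its entries $X_{i,j}$ with $j\notin F$ and $i\notin L_j$.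
   Context: Parameters: integers $n,r,m,m'$ with $1\le m<n$, $1\le m'\le n-m$, and $\mathbf{e}=(e_0,\dots,e_{m'-1})$ with $0<e_0\le\cdots\le e_{m'-1}\le r$; $s=\sum_l e_l$. Field $\mathbb{F}=GF(2^w)$ with $n+m'\le 2^w$, $r+e_{m'-1}\le 2^w$. An $(\eta,\kappa)$-code is a linear MDS code of length $\eta$ and dimension $\kappa$ (any $\kappa$ coordinates determine the codeword); systematic means a codeword is the $\kappa$ input symbols followed by $\eta-\kappa$ parity symbols. $\mathcal{C}_{row}$ is a systematic $(n+m',n-m)$-code and $\mathcal{C}_{col}$ a systematic $(r+e_{m'-1},r)$-code over $\mathbb{F}$. Stair positions: $T=\{(i,\,n-m-m'+l): 0\le l\le m'-1,\ r-e_l\le i\le r-1\}$ (inside global parity symbol $\hat g_{h,l}$ sits at row $r-e_l+h$ of column $n-m-m'+l$). Data positions: all $(i,j)$ with $0\le i\le r-1$, $0\le j\le n-m-1$, $(i,j)\notin T$; there are $r(n-m)-s$ of them. Columns $n-m,\dots,n-1$ hold row parity symbols. $\mathcal{S}$ is the set of $r\times n$ arrays $X$ over $\mathbb{F}$ for which there exists an $r\times m'$ array $P'$ such that (i) for each row $i$, the vector $(X_{i,0},\dots,X_{i,n-1},P'_{i,0},\dots,P'_{i,m'-1})$ is a codeword of $\mathcal{C}_{row}$ (i.e., it is the $\mathcal{C}_{row}$-encoding of $(X_{i,0},\dots,X_{i,n-m-1})$); and (ii) for each $l$, encoding column $(P'_{0,l},\dots,P'_{r-1,l})$ with $\mathcal{C}_{col}$,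 the first $e_l$ of its $e_{m'-1}$ parity symbols are zero (the outside global parity symbols are fixed to zero). *)

theory Defs
  imports "Jordan_Normal_Form.Matrix" "HOL-Library.FuncSet"
begin

definition linear_code :: "nat \<Rightarrow> 'a::field list set \<Rightarrow> bool" where
  "linear_code eta C \<longleftrightarrow>
     (\<forall>c\<in>C. length c = eta) \<and> replicate eta 0 \<in> C \<and>
     (\<forall>c\<in>C. \<forall>d\<in>C. map2 (+) c d \<in> C) \<and>
     (\<forall>a. \<forall>c\<in>C. map (\<lambda>x. a * x) c \<in> C)"

definition mds_code :: "nat \<Rightarrow> nat \<Rightarrow> 'a::field list set \<Rightarrow> bool" where
  "mds_code eta kappa C \<longleftrightarrow> linear_code eta C \<and>
     (\<forall>I. I \<subseteq> {0..<eta} \<and> card I = kappa \<longrightarrow>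
        bij_betw (\<lambda>c. map (\<lambda>i. c ! i) (sorted_list_of_set I)) C {v. length v = kappa})"

definition stair_pos :: "nat \<Rightarrow> nat \<Rightarrow> nat \<Rightarrow> nat \<Rightarrow> (nat \<Rightarrow> nat) \<Rightarrow> (nat \<times> nat) set" where
  "stair_pos n r m m' e = {(i, n - m - m' + l) | i l. l < m' \<and> r - e l \<le> i \<and> i < r}"

definition data_pos :: "nat \<Rightarrow> nat \<Rightarrow> nat \<Rightarrow> nat \<Rightarrow> (nat \<Rightarrow> nat) \<Rightarrow> (nat \<times> nat) set" where
  "data_pos n r m m' e = {(i, j). i < r \<and> j < n - m \<and> (i, j) \<notin> stair_pos n r m m' e}"

definition stair_code ::
  "'a::field list set \<Rightarrow> 'a list set \<Rightarrow> nat \<Rightarrow> nat \<Rightarrow> nat \<Rightarrow> (nat \<Rightarrow> nat) \<Rightarrow> 'a mat set" where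
  "stair_code Crow Ccol n r m' e =
     {X \<in> carrier_mat r n. \<exists>P' \<in> carrier_mat r m'.
        (\<forall>i<r. list_of_vec (row X i) @ list_of_vec (row P' i) \<in> Crow) \<and>
        (\<forall>l<m'. \<forall>c\<in>Ccol. take r c = list_of_vec (col P' l) \<longrightarrow> (\<forall>k<e l. c ! (r + k) = 0))}"

end

theory Submission
  imports Defs
begin

text \<open>Given a STAIR codeword together
  with its intermediate parity array \<open>P\<close>, encoding every column of the extended array
  \<open>[X | P]\<close> with the column code gives an \<open>(r + E) \<times> (n + m')\<close> product array whose outside
  global parities (rows \<open>r, \<dots>, r + e l - 1\<close> of column \<open>n + l\<close>) vanish.

  (b) For the difference of two codewords agreeing outside an erasure pattern, the locale
  \<open>stair_erasure\<close> shows that this array is zero: the parity rows \<open>r + k\<close> vanish one after the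
  other (a row codeword with \<open>n - m\<close> known zeros), then every surviving column (a column
  codeword with \<open>r\<close> known zeros), then every data row.

  (a) Erasing the stair is such a pattern, so the data map is injective.  It is surjective by
  counting: row-encoding arbitrary row data and column-encoding the intermediate parities is
  linear, and the row data whose outside global parities vanish (a kernel of codimension at
  most the number of stair positions) encode to distinct STAIR codewords.\<close>

section \<open>Codewords as functions\<close>

definition is_codeword :: "'a list set \<Rightarrow> nat \<Rightarrow> (nat \<Rightarrow> 'a) \<Rightarrow> bool" where
  "is_codeword C eta f \<longleftrightarrow> map f [0..<eta] \<in> C"

lemma is_codeword_cong:
  assumes "is_codeword C eta f" and "\<And>q. q < eta \<Longrightarrow> f q = g q"
  shows "is_codeword C eta g"
proof -
  have "map f [0..<eta] = map g [0..<eta]" using assms(2) by simp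
  thus ?thesis using assms(1) unfolding is_codeword_def by metis
qed

lemma is_codeword_nth:
  assumes "linear_code eta C" and "c \<in> C"
  shows "is_codeword C eta (\<lambda>q. c ! q)"
proof -
  have "length c = eta" using assms unfolding linear_code_def by blast
  hence "map (\<lambda>q. c ! q) [0..<eta] = c" using map_nth[of c] by simp
  thus ?thesis using assms(2) unfolding is_codeword_def by simp
qed

lemma is_codeword_zero: "linear_code eta C \<Longrightarrow> is_codeword C eta (\<lambda>q. 0)"
  unfolding is_codeword_def linear_code_def by (simp add: map_replicate_const)

lemma map2_map_map: "map2 h (map f xs) (map g xs) = map (\<lambda>x. h (f x) (g x)) xs"
  by (induction xs) auto

lemma is_codeword_add:
  assumes "linear_code eta C" "is_codeword C eta f" "is_codeword C eta g"
  shows "is_codeword C eta (\<lambda>q. f q + g q)"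
  using assms map2_map_map[of "(+)" f "[0..<eta]" g]
  unfolding is_codeword_def linear_code_def by metis

lemma is_codeword_scale:
  assumes "linear_code eta C" "is_codeword C eta f"
  shows "is_codeword C eta (\<lambda>q. a * f q)"
proof -
  have "map ((*) a) (map f [0..<eta]) \<in> C"
    using assms unfolding is_codeword_def linear_code_def by blast
  thus ?thesis unfolding is_codeword_def by (simp add: comp_def)
qed

lemma is_codeword_diff:
  assumes "linear_code eta C" "is_codeword C eta f" "is_codeword C eta g"
  shows "is_codeword C eta (\<lambda>q. f q - g q)"
  using is_codeword_add[OF assms(1,2) is_codeword_scale[OF assms(1,3), of "-1"]] by simp

lemma is_codeword_sum:
  assumes lin: "linear_code eta C" and "finite A" and "\<And>i. i \<in> A \<Longrightarrow> is_codeword C eta (f i)"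
  shows "is_codeword C eta (\<lambda>q. \<Sum>i\<in>A. a i * f i q)"
  using assms(2,3)
proof (induction A rule: finite_induct)
  case empty
  show ?case using is_codeword_zero[OF lin] by simp
next
  case (insert x A)
  hence "is_codeword C eta (\<lambda>q. a x * f x q + (\<Sum>i\<in>A. a i * f i q))"
    using is_codeword_add[OF lin] is_codeword_scale[OF lin] by simp
  thus ?case using insert by simp
qed

section \<open>MDS codes and systematic encoding\<close>

lemma mds_vanishing:
  assumes mds: "mds_code eta kappa C" and f: "is_codeword C eta f"
    and I: "I \<subseteq> {0..<eta}" "kappa \<le> card I" and zero: "\<And>i. i \<in> I \<Longrightarrow> f i = 0"
    and q: "q < eta"
  shows "f q = 0"
proof -
  obtain I' where I': "I' \<subseteq> I" "card I' = kappa"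
    using I obtain_subset_with_card_n by metis
  let ?proj = "\<lambda>c. map (\<lambda>i. c ! i) (sorted_list_of_set I')"
  have "I' \<subseteq> {0..<eta}" using I'(1) I(1) by blast
  hence "inj_on ?proj C" using mds I'(2) unfolding mds_code_def bij_betw_def by blast
  moreover have "map f [0..<eta] \<in> C" "replicate eta 0 \<in> C"
    using f mds unfolding is_codeword_def mds_code_def linear_code_def by auto
  moreover have "?proj (map f [0..<eta]) = ?proj (replicate eta 0)"
  proof (rule map_cong[OF refl])
    fix i assume "i \<in> set (sorted_list_of_set I')"
    hence "i \<in> I"
      using I' I finite_subset by (metis finite_atLeastLessThan set_sorted_list_of_set subsetD)
    thus "map f [0..<eta] ! i = replicate eta 0 ! i" using I zero by auto
  qed
  ultimately have "map f [0..<eta] = replicate eta 0" by (meson inj_onD)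
  thus ?thesis using q by (metis diff_zero nth_map_upt nth_replicate add_0)
qed

definition sys_enc :: "'a list set \<Rightarrow> nat \<Rightarrow> nat \<Rightarrow> (nat \<Rightarrow> 'a) \<Rightarrow> nat \<Rightarrow> 'a::field" where
  "sys_enc C eta kappa u = (SOME g. is_codeword C eta g \<and> (\<forall>j<kappa. g j = u j))"

text \<open>Existence of the systematic encoding: projection onto the first \<open>kappa\<close> coordinates
  maps the code onto all words of length \<open>kappa\<close>.\<close>

lemma mds_systematic_exists:
  assumes mds: "mds_code eta kappa C" and le: "kappa \<le> eta"
  shows "\<exists>g. is_codeword C eta g \<and> (\<forall>j<kappa. g j = (u j :: 'a::field))"
proof -
  have "{0..<kappa} \<subseteq> {0..<eta}" using le by auto
  hence "bij_betw (\<lambda>c. map (\<lambda>i. c ! i) (sorted_list_of_set {0..<kappa})) C {v. length v = kappa}"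
    using mds unfolding mds_code_def by (metis card_atLeastLessThan diff_zero)
  hence "map u [0..<kappa] \<in> (\<lambda>c. map (\<lambda>i. c ! i) [0..<kappa]) ` C"
    unfolding bij_betw_def by simp
  then obtain c where c: "c \<in> C" "map (\<lambda>i. c ! i) [0..<kappa] = map u [0..<kappa]"
    by (auto simp del: map_eq_conv)
  have "is_codeword C eta (\<lambda>q. c ! q)" using is_codeword_nth c(1) mds unfolding mds_code_def by blast
  moreover have "\<forall>j<kappa. c ! j = u j" using c(2) by simp
  ultimately show ?thesis by blast
qed

lemma sys_enc_codeword:
  assumes "mds_code eta kappa C" "kappa \<le> eta"
  shows "is_codeword C eta (sys_enc C eta kappa u)"
  using someI_ex[OF mds_systematic_exists[OF assms, of u]] unfolding sys_enc_def by blast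

lemma sys_enc_systematic:
  assumes "mds_code eta kappa C" "kappa \<le> eta" "j < kappa"
  shows "sys_enc C eta kappa u j = u j"
  using someI_ex[OF mds_systematic_exists[OF assms(1,2), of u]] assms(3) unfolding sys_enc_def by blast

lemma sys_enc_unique:
  assumes mds: "mds_code eta kappa C" and le: "kappa \<le> eta" and g: "is_codeword C eta g"
    and gu: "\<And>j. j < kappa \<Longrightarrow> g j = u j" and q: "q < eta"
  shows "g q = sys_enc C eta kappa u q"
proof -
  have lin: "linear_code eta C" using mds unfolding mds_code_def by simp
  have "is_codeword C eta (\<lambda>q. g q - sys_enc C eta kappa u q)"
    using is_codeword_diff[OF lin g sys_enc_codeword[OF mds le]] .
  hence "g q - sys_enc C eta kappa u q = 0"
    by (rule mds_vanishing[OF mds _ _ _ _ q, where I="{0..<kappa}"])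
       (use le gu sys_enc_systematic[OF mds le] in auto)
  thus ?thesis by simp
qed

lemma sys_enc_cong:
  assumes "\<And>j. j < kappa \<Longrightarrow> u j = v j"
  shows "sys_enc C eta kappa u = sys_enc C eta kappa v"
proof -
  have "(\<lambda>g. is_codeword C eta g \<and> (\<forall>j<kappa. g j = u j))
      = (\<lambda>g. is_codeword C eta g \<and> (\<forall>j<kappa. g j = v j))" using assms by auto
  thus ?thesis unfolding sys_enc_def by simp
qed

lemma sys_enc_diff:
  assumes mds: "mds_code eta kappa C" and le: "kappa \<le> eta" and q: "q < eta"
  shows "sys_enc C eta kappa (\<lambda>j. u j - v j) q = sys_enc C eta kappa u q - sys_enc C eta kappa v q"
proof -
  have lin: "linear_code eta C" using mds unfolding mds_code_def by simp
  have "is_codeword C eta (\<lambda>q. sys_enc C eta kappa u q - sys_enc C eta kappa v q)"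
    using is_codeword_diff[OF lin sys_enc_codeword[OF mds le] sys_enc_codeword[OF mds le]] .
  moreover have "\<And>j. j < kappa \<Longrightarrow> sys_enc C eta kappa u j - sys_enc C eta kappa v j = u j - v j"
    using sys_enc_systematic[OF mds le] by simp
  ultimately have "(\<lambda>q. sys_enc C eta kappa u q - sys_enc C eta kappa v q) q
      = sys_enc C eta kappa (\<lambda>j. u j - v j) q"
    by (rule sys_enc_unique[OF mds le _ _ q])
  thus ?thesis by simp
qed

lemma sys_enc_sum:
  assumes mds: "mds_code eta kappa C" and le: "kappa \<le> eta" and q: "q < eta" and fin: "finite A"
  shows "sys_enc C eta kappa (\<lambda>j. \<Sum>i\<in>A. a i * u i j) q = (\<Sum>i\<in>A. a i * sys_enc C eta kappa (u i) q)"
proof -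
  have lin: "linear_code eta C" using mds unfolding mds_code_def by simp
  have "is_codeword C eta (\<lambda>q. \<Sum>i\<in>A. a i * sys_enc C eta kappa (u i) q)"
    by (rule is_codeword_sum[OF lin fin]) (rule sys_enc_codeword[OF mds le])
  moreover have "\<And>j. j < kappa \<Longrightarrow> (\<Sum>i\<in>A. a i * sys_enc C eta kappa (u i) j) = (\<Sum>i\<in>A. a i * u i j)"
    by (intro sum.cong refl) (simp add: sys_enc_systematic[OF mds le])
  ultimately have "(\<lambda>q. \<Sum>i\<in>A. a i * sys_enc C eta kappa (u i) q) q
      = sys_enc C eta kappa (\<lambda>j. \<Sum>i\<in>A. a i * u i j) q"
    by (rule sys_enc_unique[OF mds le _ _ q])
  thus ?thesis by simp
qed

lemma column_encoding_rows:
  fixes W :: "nat \<Rightarrow> nat \<Rightarrow> 'a::field"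
  assumes lin: "linear_code N Crow" and mds: "mds_code eta r Ccol" and le: "r \<le> eta"
    and rows: "\<And>i. i < r \<Longrightarrow> is_codeword Crow N (W i)" and q: "q < eta"
  shows "is_codeword Crow N (\<lambda>j. sys_enc Ccol eta r (\<lambda>i. W i j) q)"
proof -
  define unit :: "nat \<Rightarrow> nat \<Rightarrow> 'a" where "unit i = (\<lambda>i'. if i' = i then 1 else 0)" for i
  have expand: "sys_enc Ccol eta r (\<lambda>i. W i j) q = (\<Sum>i\<in>{..<r}. sys_enc Ccol eta r (unit i) q * W i j)"
    for j
  proof -
    have "sys_enc Ccol eta r (\<lambda>i. W i j) = sys_enc Ccol eta r (\<lambda>i'. \<Sum>i\<in>{..<r}. W i j * unit i i')"
      by (rule sys_enc_cong) (simp add: unit_def if_distrib cong: if_cong)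
    thus ?thesis using sys_enc_sum[OF mds le q, of "{..<r}" "\<lambda>i. W i j" unit]
      by (simp add: mult.commute)
  qed
  have "is_codeword Crow N (\<lambda>j. \<Sum>i\<in>{..<r}. sys_enc Ccol eta r (unit i) q * W i j)"
    by (rule is_codeword_sum[OF lin]) (auto intro: rows)
  thus ?thesis using expand by simp
qed

section \<open>Erasure decoding of a product array with zero global parities\<close>

text \<open>The decoding argument for STAIR codes, stated for the difference \<open>A\<close> of two codewords.
  \<open>A\<close> is an \<open>(r + E) \<times> (n + m')\<close> array whose rows lie in the row code and whose first \<open>n\<close>
  columns lie in the column code; row \<open>r + k\<close> of the "virtual" parity column \<open>n + l\<close> is zero for
  \<open>k < e l\<close> (outside global parities).\<close>

locale stair_erasure =
  fixes Crow Ccol :: "'a::field list set" and n m' r E K :: nat and e :: "nat \<Rightarrow> nat"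
    and F :: "nat set" and L :: "nat \<Rightarrow> nat set" and A :: "nat \<Rightarrow> nat \<Rightarrow> 'a"
  assumes mds_row: "mds_code (n + m') K Crow"
    and mds_col: "mds_code (r + E) r Ccol"
    and rows: "\<And>q. q < r + E \<Longrightarrow> is_codeword Crow (n + m') (A q)"
    and cols: "\<And>j. j < n \<Longrightarrow> is_codeword Ccol (r + E) (\<lambda>q. A q j)"
    and global_zero: "\<And>l k. l < m' \<Longrightarrow> k < e l \<Longrightarrow> A (r + k) (n + l) = 0"
    and e_le: "\<And>l. l < m' \<Longrightarrow> e l \<le> E"
    and known_zero: "\<And>i j. j < n \<Longrightarrow> j \<notin> F \<Longrightarrow> i < r \<Longrightarrow> i \<notin> L j \<Longrightarrow> A i j = 0"
    and F_sub: "F \<subseteq> {0..<n}" and K_le: "K + card F \<le> n"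
    and L_sub: "\<And>j. j < n \<Longrightarrow> j \<notin> F \<Longrightarrow> L j \<subseteq> {0..<r}"
    and profile: "\<And>k. card {j. j < n \<and> j \<notin> F \<and> k < card (L j)} \<le> card {l. l < m' \<and> k < e l}"
begin

text \<open>A surviving column with \<open>c\<close> erasures is zero as soon as its first \<open>c\<close> parity symbols are:
  it then vanishes on \<open>r\<close> coordinates of a column codeword.\<close>

lemma column_zero:
  assumes j: "j < n" "j \<notin> F" and cE: "card (L j) \<le> E"
    and parity: "\<And>k. k < card (L j) \<Longrightarrow> A (r + k) j = 0" and q: "q < r + E"
  shows "A q j = 0"
proof -
  have Ls: "L j \<subseteq> {0..<r}" using L_sub j by simp
  hence cLr: "card (L j) \<le> r" using card_mono[OF finite_atLeastLessThan Ls] by simp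
  define I where "I = ({0..<r} - L j) \<union> {r..<r + card (L j)}"
  have finL: "finite (L j)" using Ls finite_subset by blast
  have "card I = card ({0..<r} - L j) + card {r..<r + card (L j)}"
    unfolding I_def by (rule card_Un_disjoint) auto
  also have "\<dots> = (r - card (L j)) + card (L j)" using card_Diff_subset[OF finL Ls] by simp
  finally have cI: "card I = r" using cLr by simp
  show ?thesis
  proof (rule mds_vanishing[OF mds_col cols[OF j(1)] _ _ _ q, where I = I])
    show "I \<subseteq> {0..<r + E}" unfolding I_def using cE by auto
    show "r \<le> card I" using cI by simp
    fix i assume i: "i \<in> I"
    show "A i j = 0"
    proof (cases "i < r")
      case True
      hence "i \<notin> L j" using i unfolding I_def by simp
      thus ?thesis using known_zero[OF j True] by simp
    next
      case False
      hence "i = r + (i - r)" "i - r < card (L j)" using i unfolding I_def by auto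
      thus ?thesis using parity[of "i - r"] by simp
    qed
  qed
qed

lemma enough_zeros_in_parity_row:
  "K \<le> card {j. j < n \<and> j \<notin> F \<and> card (L j) \<le> k} + card {l. l < m' \<and> k < e l}"
proof -
  have finF: "finite F" using F_sub finite_subset by blast
  have "{j. j < n \<and> j \<notin> F} = {0..<n} - F" by auto
  hence "n - card F = card {j. j < n \<and> j \<notin> F}" using card_Diff_subset[OF finF F_sub] by simp
  also have "{j. j < n \<and> j \<notin> F}
      = {j. j < n \<and> j \<notin> F \<and> card (L j) \<le> k} \<union> {j. j < n \<and> j \<notin> F \<and> k < card (L j)}" by auto
  also have "card \<dots> = card {j. j < n \<and> j \<notin> F \<and> card (L j) \<le> k}
      + card {j. j < n \<and> j \<notin> F \<and> k < card (L j)}" by (rule card_Un_disjoint) auto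
  finally show ?thesis using profile[of k] K_le by linarith
qed

text \<open>The parity rows vanish, row by row: row \<open>r + k\<close> is a row codeword which is zero on the
  columns counted above (by induction and \<open>column_zero\<close>, resp. by the global parities).\<close>

lemma parity_rows_zero:
  assumes "k < E" and "j < n + m'"
  shows "A (r + k) j = 0"
  using assms
proof (induction k arbitrary: j rule: less_induct)
  case (less k)
  define Good where "Good = {j. j < n \<and> j \<notin> F \<and> card (L j) \<le> k}"
  define Glob where "Glob = {l. l < m' \<and> k < e l}"
  define I where "I = Good \<union> (\<lambda>l. n + l) ` Glob"
  have "card I = card Good + card ((\<lambda>l. n + l) ` Glob)"
    unfolding I_def Good_def Glob_def by (rule card_Un_disjoint) auto
  hence KI: "K \<le> card I"
    using enough_zeros_in_parity_row[of k] card_image[of "\<lambda>l. n + l" Glob]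
    unfolding Good_def Glob_def by simp
  have row: "r + k < r + E" using less.prems(1) by simp
  show ?case
  proof (rule mds_vanishing[OF mds_row rows[OF row] _ KI _ less.prems(2)])
    show "I \<subseteq> {0..<n + m'}" unfolding I_def Good_def Glob_def by auto
    fix i assume "i \<in> I"
    then consider "i \<in> Good" | l where "l \<in> Glob" "i = n + l" unfolding I_def by blast
    thus "A (r + k) i = 0"
    proof cases
      case 1
      hence i: "i < n" "i \<notin> F" "card (L i) \<le> k" unfolding Good_def by auto
      show ?thesis
      proof (rule column_zero[OF i(1,2)])
        show "card (L i) \<le> E" using i(3) less.prems(1) by simp
        show "r + k < r + E" using less.prems(1) by simp
        show "A (r + k') i = 0" if "k' < card (L i)" for k'
          using less.IH[of k' i] that i less.prems(1) by simp
      qed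
    next
      case (2 l)
      thus ?thesis using global_zero[of l k] unfolding Glob_def by simp
    qed
  qed
qed

text \<open>No surviving column has more than \<open>E\<close> erasures (profile condition at \<open>k = E\<close>).\<close>

lemma erasures_le_E:
  assumes "j < n" "j \<notin> F"
  shows "card (L j) \<le> E"
proof -
  have "{l. l < m' \<and> E < e l} = {}" using e_le by force
  hence "card {j. j < n \<and> j \<notin> F \<and> E < card (L j)} = 0"
    using profile[of E] by (metis card.empty le_zero_eq)
  hence "{j. j < n \<and> j \<notin> F \<and> E < card (L j)} = {}" by simp
  thus ?thesis using assms by auto
qed

text \<open>Main result of the locale: every surviving column vanishes (\<open>column_zero\<close> with the zero
  parity rows), and a data row vanishing on the \<open>n - card F \<ge> K\<close> surviving columns is zero.\<close>

theorem data_zero: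
  assumes i: "i < r" and j: "j < n"
  shows "A i j = 0"
proof (rule mds_vanishing[OF mds_row rows, where I = "{0..<n} - F"])
  show "i < r + E" "j < n + m'" using i j by auto
  have finF: "finite F" using F_sub finite_subset by blast
  show "K \<le> card ({0..<n} - F)" using card_Diff_subset[OF finF F_sub] K_le by simp
  show "{0..<n} - F \<subseteq> {0..<n + m'}" by auto
  fix j' assume "j' \<in> {0..<n} - F"
  hence j': "j' < n" "j' \<notin> F" by auto
  show "A i j' = 0"
  proof (rule column_zero[OF j' erasures_le_E[OF j']])
    show "i < r + E" using i by simp
    fix k assume "k < card (L j')"
    thus "A (r + k) j' = 0" using erasures_le_E[OF j'] j' parity_rows_zero by simp
  qed
qed

end

definition ext_row :: "nat \<Rightarrow> 'a mat \<Rightarrow> 'a mat \<Rightarrow> nat \<Rightarrow> nat \<Rightarrow> 'a" where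
  "ext_row n X P i j = (if j < n then X $$ (i, j) else P $$ (i, j - n))"

lemma row_append_list:
  assumes X: "X \<in> carrier_mat r n" and P: "P \<in> carrier_mat r m'" and i: "i < r"
  shows "list_of_vec (row X i) @ list_of_vec (row P i) = map (ext_row n X P i) [0..<n + m']"
  unfolding ext_row_def
proof (rule nth_equalityI)
  show "length (list_of_vec (row X i) @ list_of_vec (row P i)) =
        length (map (\<lambda>j. if j < n then X $$ (i,j) else P $$ (i, j - n)) [0..<n+m'])"
    using X P by simp
  fix q assume q: "q < length (list_of_vec (row X i) @ list_of_vec (row P i))"
  hence q': "q < n + m'" using X P by simp
  show "(list_of_vec (row X i) @ list_of_vec (row P i)) ! q =
        map (\<lambda>j. if j < n then X $$ (i,j) else P $$ (i, j - n)) [0..<n+m'] ! q"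
    using X P i q' by (auto simp: nth_append list_of_vec_index)
qed

lemma parity_zero_iff:
  assumes mds: "mds_code eta r C" and d: "r + d \<le> eta"
  shows "(\<forall>c\<in>C. take r c = map u [0..<r] \<longrightarrow> (\<forall>k<d. c ! (r + k) = 0))
     \<longleftrightarrow> (\<forall>k<d. sys_enc C eta r u (r + k) = 0)"
proof
  have le: "r \<le> eta" using d by simp
  assume zero: "\<forall>c\<in>C. take r c = map u [0..<r] \<longrightarrow> (\<forall>k<d. c ! (r + k) = 0)"
  define c where "c = map (sys_enc C eta r u) [0..<eta]"
  have "c \<in> C" using sys_enc_codeword[OF mds le] unfolding is_codeword_def c_def .
  moreover have "take r c = map u [0..<r]"
  proof (rule nth_equalityI)
    show "length (take r c) = length (map u [0..<r])" using le unfolding c_def by simp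
    fix i assume "i < length (take r c)"
    hence i: "i < r" using le unfolding c_def by simp
    have "take r c ! i = sys_enc C eta r u i" using i le unfolding c_def by simp
    also have "\<dots> = u i" by (rule sys_enc_systematic[OF mds le i])
    finally show "take r c ! i = map u [0..<r] ! i" using i by simp
  qed
  ultimately have cz: "c ! (r + k) = 0" if "k < d" for k using zero that by blast
  show "\<forall>k<d. sys_enc C eta r u (r + k) = 0"
  proof (intro allI impI)
    fix k assume k: "k < d"
    have "sys_enc C eta r u (r + k) = c ! (r + k)" using k d unfolding c_def by simp
    thus "sys_enc C eta r u (r + k) = 0" using cz[OF k] by simp
  qed
next
  have le: "r \<le> eta" using d by simp
  have lin: "linear_code eta C" using mds unfolding mds_code_def by simp
  assume zero: "\<forall>k<d. sys_enc C eta r u (r + k) = 0"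
  show "\<forall>c\<in>C. take r c = map u [0..<r] \<longrightarrow> (\<forall>k<d. c ! (r + k) = 0)"
  proof (intro ballI impI allI)
    fix c k assume c: "c \<in> C" and tk: "take r c = map u [0..<r]" and k: "k < d"
    have cu: "c ! i = u i" if "i < r" for i
    proof -
      have "c ! i = take r c ! i" using that by simp
      also have "\<dots> = u i" using that unfolding tk by simp
      finally show ?thesis .
    qed
    have "c ! (r + k) = sys_enc C eta r u (r + k)"
      by (rule sys_enc_unique[OF mds le is_codeword_nth[OF lin c] cu]) (use k d in simp_all)
    thus "c ! (r + k) = 0" using zero k by simp
  qed
qed

lemma stair_code_iff:
  assumes mds_col: "mds_code (r + E) r Ccol" and e_le: "\<And>l. l < m' \<Longrightarrow> e l \<le> E"
  shows "X \<in> stair_code Crow Ccol n r m' e \<longleftrightarrow> X \<in> carrier_mat r n \<and>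
    (\<exists>P\<in>carrier_mat r m'. (\<forall>i<r. is_codeword Crow (n + m') (ext_row n X P i)) \<and>
       (\<forall>l<m'. \<forall>k<e l. sys_enc Ccol (r + E) r (\<lambda>i. P $$ (i, l)) (r + k) = 0))"
proof -
  have rows_iff: "(\<forall>i<r. list_of_vec (row X i) @ list_of_vec (row P i) \<in> Crow)
      \<longleftrightarrow> (\<forall>i<r. is_codeword Crow (n + m') (ext_row n X P i))"
    if "X \<in> carrier_mat r n" "P \<in> carrier_mat r m'" for P
    using row_append_list[OF that] unfolding is_codeword_def by simp
  have cols_iff: "(\<forall>c\<in>Ccol. take r c = list_of_vec (col P l) \<longrightarrow> (\<forall>k<e l. c ! (r + k) = 0))
      \<longleftrightarrow> (\<forall>k<e l. sys_enc Ccol (r + E) r (\<lambda>i. P $$ (i, l)) (r + k) = 0)"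
    if P: "P \<in> carrier_mat r m'" and l: "l < m'" for P l
  proof -
    have "list_of_vec (col P l) = map (\<lambda>i. P $$ (i, l)) [0..<r]"
      by (rule nth_equalityI) (use P l in \<open>auto simp: list_of_vec_index\<close>)
    moreover have "r + e l \<le> r + E" using e_le[OF l] by simp
    ultimately show ?thesis using parity_zero_iff[OF mds_col, of "e l" "\<lambda>i. P $$ (i, l)"] by simp
  qed
  have "X \<in> stair_code Crow Ccol n r m' e \<longleftrightarrow> X \<in> carrier_mat r n \<and>
    (\<exists>P\<in>carrier_mat r m'. (\<forall>i<r. list_of_vec (row X i) @ list_of_vec (row P i) \<in> Crow) \<and>
       (\<forall>l<m'. \<forall>c\<in>Ccol. take r c = list_of_vec (col P l) \<longrightarrow> (\<forall>k<e l. c ! (r + k) = 0)))"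
    unfolding stair_code_def mem_Collect_eq ..
  also have "\<dots> \<longleftrightarrow> X \<in> carrier_mat r n \<and>
    (\<exists>P\<in>carrier_mat r m'. (\<forall>i<r. is_codeword Crow (n + m') (ext_row n X P i)) \<and>
       (\<forall>l<m'. \<forall>k<e l. sys_enc Ccol (r + E) r (\<lambda>i. P $$ (i, l)) (r + k) = 0))"
    using rows_iff cols_iff by (intro conj_cong[OF refl] bex_cong[OF refl] conj_cong) auto
  finally show ?thesis .
qed

text \<open>Two codewords of the STAIR code that agree outside an erasure pattern satisfying the
  profile condition are equal: apply the locale \<open>stair_erasure\<close> to the column encoding of
  the difference of their extended arrays.\<close>

lemma stair_decode:
  fixes Crow Ccol :: "'a::field list set"
  assumes mds_row: "mds_code (n + m') K Crow" and mds_col: "mds_code (r + E) r Ccol"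
    and e_le: "\<And>l. l < m' \<Longrightarrow> e l \<le> E"
    and X: "X \<in> stair_code Crow Ccol n r m' e" and Y: "Y \<in> stair_code Crow Ccol n r m' e"
    and F_sub: "F \<subseteq> {0..<n}" and K_le: "K + card F \<le> n"
    and L_sub: "\<And>j. j < n \<Longrightarrow> j \<notin> F \<Longrightarrow> L j \<subseteq> {0..<r}"
    and profile: "\<And>k. card {j. j < n \<and> j \<notin> F \<and> k < card (L j)} \<le> card {l. l < m' \<and> k < e l}"
    and agree: "\<And>i j. j < n \<Longrightarrow> j \<notin> F \<Longrightarrow> i < r \<Longrightarrow> i \<notin> L j \<Longrightarrow> X $$ (i, j) = Y $$ (i, j)"
  shows "X = Y"
proof -
  have S_iff: "Z \<in> stair_code Crow Ccol n r m' e \<longleftrightarrow> Z \<in> carrier_mat r n \<and>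
    (\<exists>P\<in>carrier_mat r m'. (\<forall>i<r. is_codeword Crow (n + m') (ext_row n Z P i)) \<and>
       (\<forall>l<m'. \<forall>k<e l. sys_enc Ccol (r + E) r (\<lambda>i. P $$ (i, l)) (r + k) = 0))" for Z
    by (rule stair_code_iff[OF mds_col]) (rule e_le)
  obtain PX where XC: "X \<in> carrier_mat r n" and PX: "PX \<in> carrier_mat r m'"
    and rows_X: "\<And>i. i < r \<Longrightarrow> is_codeword Crow (n + m') (ext_row n X PX i)"
    and glob_X: "\<And>l k. l < m' \<Longrightarrow> k < e l \<Longrightarrow> sys_enc Ccol (r + E) r (\<lambda>i. PX $$ (i, l)) (r + k) = 0"
    using S_iff[THEN iffD1, OF X] by blast
  obtain PY where YC: "Y \<in> carrier_mat r n" and PY: "PY \<in> carrier_mat r m'"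
    and rows_Y: "\<And>i. i < r \<Longrightarrow> is_codeword Crow (n + m') (ext_row n Y PY i)"
    and glob_Y: "\<And>l k. l < m' \<Longrightarrow> k < e l \<Longrightarrow> sys_enc Ccol (r + E) r (\<lambda>i. PY $$ (i, l)) (r + k) = 0"
    using S_iff[THEN iffD1, OF Y] by blast
  have lin_row: "linear_code (n + m') Crow" using mds_row unfolding mds_code_def by simp
  have le: "r \<le> r + E" by simp
  define W where "W i j = ext_row n X PX i j - ext_row n Y PY i j" for i j
  define A where "A q j = sys_enc Ccol (r + E) r (\<lambda>i. W i j) q" for q j
  have A_data: "A i j = W i j" if "i < r" for i j
    unfolding A_def using sys_enc_systematic[OF mds_col le that] .
  have rows: "is_codeword Crow (n + m') (A q)" if "q < r + E" for q
    unfolding A_def W_def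
    by (rule column_encoding_rows[OF lin_row mds_col le _ that])
       (rule is_codeword_diff[OF lin_row rows_X rows_Y])
  have cols: "is_codeword Ccol (r + E) (\<lambda>q. A q j)" for j
    unfolding A_def using sys_enc_codeword[OF mds_col le] .
  have global: "A (r + k) (n + l) = 0" if l: "l < m'" and k: "k < e l" for l k
  proof -
    have q: "r + k < r + E" using k e_le[OF l] by simp
    have "A (r + k) (n + l) = sys_enc Ccol (r + E) r (\<lambda>i. PX $$ (i, l) - PY $$ (i, l)) (r + k)"
      unfolding A_def W_def ext_row_def by simp
    also have "\<dots> = sys_enc Ccol (r + E) r (\<lambda>i. PX $$ (i, l)) (r + k)
                   - sys_enc Ccol (r + E) r (\<lambda>i. PY $$ (i, l)) (r + k)"
      by (rule sys_enc_diff[OF mds_col le q])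
    finally show ?thesis using glob_X[OF l k] glob_Y[OF l k] by simp
  qed
  have known: "A i j = 0" if "j < n" "j \<notin> F" "i < r" "i \<notin> L j" for i j
    using A_data[of i j] agree[OF that] that unfolding W_def ext_row_def by simp
  interpret stair_erasure Crow Ccol n m' r E K e F L A
    by (rule stair_erasure.intro[OF mds_row mds_col rows cols global e_le known F_sub K_le L_sub
          profile])
  show "X = Y"
  proof (rule eq_matI)
    fix i j assume "i < dim_row Y" "j < dim_col Y"
    hence ij: "i < r" "j < n" using YC by auto
    show "X $$ (i, j) = Y $$ (i, j)"
      using data_zero[OF ij] A_data[OF ij(1)] ij unfolding W_def ext_row_def by simp
  qed (use XC YC in auto)
qed

lemma card_above_sorted:
  fixes f :: "'b::linorder \<Rightarrow> nat"
  assumes "finite J"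
  shows "card {j\<in>J. k < f j}
    = card {i. i < card J \<and> k < sort (map f (sorted_list_of_set J)) ! i}"
proof -
  define xs where "xs = sorted_list_of_set J"
  have xs: "distinct xs" "set xs = J" "length xs = card J"
    using assms unfolding xs_def by auto
  have "card {j\<in>J. k < f j} = length (filter (\<lambda>j. k < f j) xs)"
    using distinct_length_filter[OF xs(1)] xs(2) by (simp add: Collect_conj_eq Int_commute)
  also have "\<dots> = length (filter (\<lambda>x. k < x) (map f xs))" by (simp add: filter_map comp_def)
  also have "\<dots> = length (filter (\<lambda>x. k < x) (sort (map f xs)))"
    by (metis mset_filter mset_sort size_mset)
  also have "\<dots> = card {i. i < card J \<and> k < sort (map f xs) ! i}"
    using length_filter_conv_card[of "\<lambda>x. k < x" "sort (map f xs)"] xs(3) by simp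
  finally show ?thesis unfolding xs_def .
qed

text \<open>The sorted erasure sizes \<open>f\<^sub>0 \<le> \<dots> \<le> f\<^sub>t\<^sub>-\<^sub>1\<close>, compared largest-to-largest with
  \<open>e\<^sub>0 \<le> \<dots> \<le> e\<^sub>m\<^sub>'\<^sub>-\<^sub>1\<close>, yield the profile condition of \<open>stair_erasure\<close>: the \<open>i\<close>-th
  entry above a threshold is matched with \<open>e (m' - t + i)\<close>.\<close>

lemma sorted_profile_bound:
  fixes f :: "'b::linorder \<Rightarrow> nat"
  assumes finJ: "finite J" and tm: "card J \<le> m'"
    and dominated: "\<forall>i<card J. sort (map f (sorted_list_of_set J)) ! (card J - 1 - i) \<le> e (m' - 1 - i)"
  shows "card {j\<in>J. k < f j} \<le> card {l. l < m' \<and> k < e l}"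
proof -
  define t where "t = card J"
  define fs where "fs = sort (map f (sorted_list_of_set J))"
  have "card {j\<in>J. k < f j} = card {i. i < t \<and> k < fs ! i}"
    unfolding t_def fs_def by (rule card_above_sorted[OF finJ])
  also have "\<dots> \<le> card {l. l < m' \<and> k < e l}"
  proof (rule card_inj_on_le[of "\<lambda>i. m' - t + i"])
    show "inj_on (\<lambda>i. m' - t + i) {i. i < t \<and> k < fs ! i}" by (simp add: inj_on_def)
    show "finite {l. l < m' \<and> k < e l}" by simp
    show "(\<lambda>i. m' - t + i) ` {i. i < t \<and> k < fs ! i} \<subseteq> {l. l < m' \<and> k < e l}"
    proof clarify
      fix i assume i: "i < t" "k < fs ! i"
      have "t - 1 - i < t" using i(1) by simp
      hence "fs ! (t - 1 - (t - 1 - i)) \<le> e (m' - 1 - (t - 1 - i))"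
        using dominated unfolding fs_def t_def by blast
      moreover have "t - 1 - (t - 1 - i) = i" "m' - 1 - (t - 1 - i) = m' - t + i"
        using i(1) tm unfolding t_def by auto
      ultimately have "fs ! i \<le> e (m' - t + i)" by simp
      thus "m' - t + i < m' \<and> k < e (m' - t + i)" using i tm unfolding t_def by auto
    qed
  qed
  finally show ?thesis .
qed

lemma stair_code_erasure_tolerance:
  fixes Crow Ccol :: "'a::field list set"
  assumes mds_row: "mds_code (n + m') (n - m) Crow" and mds_col: "mds_code (r + E) r Ccol"
    and e_le: "\<And>l. l < m' \<Longrightarrow> e l \<le> E"
    and F_sub: "F \<subseteq> {0..<n}" and F_card: "card F \<le> m"
    and L_sub: "\<forall>j<n. j \<notin> F \<longrightarrow> L j \<subseteq> {0..<r}"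
    and t_le: "card {j. j < n \<and> j \<notin> F \<and> L j \<noteq> {}} \<le> m'"
    and dominated: "let J = {j. j < n \<and> j \<notin> F \<and> L j \<noteq> {}};
             t = card J;
             fs = sort (map (\<lambda>j. card (L j)) (sorted_list_of_set J))
         in \<forall>i<t. fs ! (t - 1 - i) \<le> e (m' - 1 - i)"
    and X: "X \<in> stair_code Crow Ccol n r m' e" and Y: "Y \<in> stair_code Crow Ccol n r m' e"
    and agree: "\<forall>j<n. j \<notin> F \<longrightarrow> (\<forall>i<r. i \<notin> L j \<longrightarrow> X $$ (i, j) = Y $$ (i, j))"
  shows "X = Y"
proof (rule stair_decode[OF mds_row mds_col e_le X Y F_sub])
  show "n - m + card F \<le> n" using F_card card_mono[OF finite_atLeastLessThan F_sub] by simp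
  show "L j \<subseteq> {0..<r}" if "j < n" "j \<notin> F" for j using L_sub that by blast
  show "X $$ (i, j) = Y $$ (i, j)" if "j < n" "j \<notin> F" "i < r" "i \<notin> L j" for i j
    using agree that by blast
  define J where "J = {j. j < n \<and> j \<notin> F \<and> L j \<noteq> {}}"
  fix k
  have "{j. j < n \<and> j \<notin> F \<and> k < card (L j)} = {j\<in>J. k < card (L j)}"
    unfolding J_def by auto
  also have "card \<dots> \<le> card {l. l < m' \<and> k < e l}"
    by (rule sorted_profile_bound) (use t_le dominated in \<open>simp_all add: J_def Let_def\<close>)
  finally show "card {j. j < n \<and> j \<notin> F \<and> k < card (L j)} \<le> card {l. l < m' \<and> k < e l}" .
qed

definition stair_rows :: "nat \<Rightarrow> nat \<Rightarrow> nat \<Rightarrow> nat \<Rightarrow> (nat \<Rightarrow> nat) \<Rightarrow> nat \<Rightarrow> nat set" where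
  "stair_rows n r m m' e j = {i. i < r \<and> (i, j) \<in> stair_pos n r m m' e}"

text \<open>Erasing the stair (and the \<open>m\<close> row-parity columns) is an erasure pattern with the right
  profile: the column \<open>n - m - m' + l\<close> loses at most \<open>e l\<close> symbols.\<close>

lemma stair_rows_profile:
  "card {j. j < n \<and> j \<notin> {n - m..<n} \<and> k < card (stair_rows n r m m' e j)}
     \<le> card {l. l < m' \<and> k < e l}"
proof -
  have "{j. j < n \<and> j \<notin> {n - m..<n} \<and> k < card (stair_rows n r m m' e j)}
      \<subseteq> (\<lambda>l. n - m - m' + l) ` {l. l < m' \<and> k < e l}"
  proof clarify
    fix j assume k: "k < card (stair_rows n r m m' e j)"
    hence "stair_rows n r m m' e j \<noteq> {}" by (metis card.empty not_less0)
    then obtain i0 where "i0 \<in> stair_rows n r m m' e j" by blast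
    then obtain l where l: "l < m'" and j: "j = n - m - m' + l"
      unfolding stair_rows_def stair_pos_def by blast
    have "stair_rows n r m m' e j \<subseteq> {r - e l..<r}"
    proof
      fix i assume "i \<in> stair_rows n r m m' e j"
      then obtain l' where "j = n - m - m' + l'" "r - e l' \<le> i" "i < r"
        unfolding stair_rows_def stair_pos_def by blast
      thus "i \<in> {r - e l..<r}" using j by simp
    qed
    from card_mono[OF finite_atLeastLessThan this]
    have "card (stair_rows n r m m' e j) \<le> e l" by simp
    thus "j \<in> (\<lambda>l. n - m - m' + l) ` {l. l < m' \<and> k < e l}" using k l j by auto
  qed
  hence "card {j. j < n \<and> j \<notin> {n - m..<n} \<and> k < card (stair_rows n r m m' e j)}
      \<le> card ((\<lambda>l. n - m - m' + l) ` {l. l < m' \<and> k < e l})"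
    by (rule card_mono[rotated]) simp
  also have "\<dots> \<le> card {l. l < m' \<and> k < e l}" by (rule card_image_le) simp
  finally show ?thesis .
qed

lemma stair_data_inj:
  fixes Crow Ccol :: "'a::field list set"
  assumes mds_row: "mds_code (n + m') (n - m) Crow" and mds_col: "mds_code (r + E) r Ccol"
    and e_le: "\<And>l. l < m' \<Longrightarrow> e l \<le> E"
  shows "inj_on (\<lambda>X. restrict (\<lambda>p. X $$ p) (data_pos n r m m' e)) (stair_code Crow Ccol n r m' e)"
proof
  fix X Y assume X: "X \<in> stair_code Crow Ccol n r m' e" and Y: "Y \<in> stair_code Crow Ccol n r m' e"
    and eq: "restrict (\<lambda>p. X $$ p) (data_pos n r m m' e) = restrict (\<lambda>p. Y $$ p) (data_pos n r m m' e)"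
  show "X = Y"
  proof (rule stair_decode[OF mds_row mds_col e_le X Y, where F = "{n - m..<n}"
        and L = "stair_rows n r m m' e"])
    show "{n - m..<n} \<subseteq> {0..<n}" by auto
    show "n - m + card {n - m..<n} \<le> n" by simp
    show "stair_rows n r m m' e j \<subseteq> {0..<r}" for j unfolding stair_rows_def by auto
    show "card {j. j < n \<and> j \<notin> {n - m..<n} \<and> k < card (stair_rows n r m m' e j)}
        \<le> card {l. l < m' \<and> k < e l}" for k by (rule stair_rows_profile)
    fix i j assume j: "j < n" "j \<notin> {n - m..<n}" and i: "i < r" "i \<notin> stair_rows n r m m' e j"
    have "j < n - m" using j by simp
    moreover have "(i, j) \<notin> stair_pos n r m m' e" using i unfolding stair_rows_def by simp
    ultimately have "(i, j) \<in> data_pos n r m m' e" using i(1) unfolding data_pos_def by simp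
    thus "X $$ (i, j) = Y $$ (i, j)" using fun_cong[OF eq, of "(i, j)"] by (simp only: restrict_apply')
  qed
qed

section \<open>Counting codewords\<close>

text \<open>If every fibre of \<open>psi\<close> on \<open>V\<close> injects into \<open>K\<close>, then \<open>|V| \<le> |psi ` V| \<cdot> |K|\<close>; for a
  linear map and its kernel \<open>K\<close> this is the rank bound \<open>|V| \<le> |B| \<cdot> |ker psi|\<close>.\<close>

lemma card_le_fibres:
  assumes finV: "finite V" and img: "psi ` V \<subseteq> B" and finB: "finite B" and finK: "finite K"
    and fibre: "\<And>x0. x0 \<in> V \<Longrightarrow> \<exists>h. inj_on h {x\<in>V. psi x = psi x0} \<and> h ` {x\<in>V. psi x = psi x0} \<subseteq> K"
  shows "card V \<le> card B * card K"
proof -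
  have "card V = card (\<Union>y\<in>psi ` V. {x\<in>V. psi x = y})" by (rule arg_cong[of _ _ card]) auto
  also have "\<dots> \<le> (\<Sum>y\<in>psi ` V. card {x\<in>V. psi x = y})" by (rule card_UN_le) (use finV in simp)
  also have "\<dots> \<le> (\<Sum>y\<in>psi ` V. card K)"
  proof (rule sum_mono)
    fix y assume "y \<in> psi ` V"
    then obtain x0 where x0: "x0 \<in> V" "y = psi x0" by auto
    from fibre[OF x0(1)] obtain h where
      "inj_on h {x\<in>V. psi x = psi x0}" "h ` {x\<in>V. psi x = psi x0} \<subseteq> K" by blast
    from card_inj_on_le[OF this finK] show "card {x\<in>V. psi x = y} \<le> card K" using x0(2) by simp
  qed
  also have "\<dots> = card (psi ` V) * card K" by simp
  also have "\<dots> \<le> card B * card K" using card_mono[OF finB img] by simp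
  finally show ?thesis .
qed

text \<open>Index set of the outside global parity symbols: \<open>(k, l)\<close> is the \<open>k\<close>-th parity symbol of
  the intermediate parity column \<open>l\<close>.  It is in bijection with the stair positions.\<close>

definition global_idx :: "nat \<Rightarrow> (nat \<Rightarrow> nat) \<Rightarrow> (nat \<times> nat) set" where
  "global_idx m' e = {(k, l). l < m' \<and> k < e l}"

lemma card_stair_pos:
  assumes e_le_r: "\<And>l. l < m' \<Longrightarrow> e l \<le> r"
  shows "card (stair_pos n r m m' e) = card (global_idx m' e)"
proof -
  let ?place = "\<lambda>(k, l). (r - e l + k, n - m - m' + l)"
  have "stair_pos n r m m' e = ?place ` global_idx m' e"
  proof (intro equalityI subsetI)
    fix p assume "p \<in> stair_pos n r m m' e"
    then obtain i l where p: "p = (i, n - m - m' + l)" "l < m'" "r - e l \<le> i" "i < r"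
      unfolding stair_pos_def by blast
    hence "(i - (r - e l), l) \<in> global_idx m' e" "p = ?place (i - (r - e l), l)"
      using e_le_r[OF p(2)] unfolding global_idx_def by auto
    thus "p \<in> ?place ` global_idx m' e" by blast
  next
    fix p assume "p \<in> ?place ` global_idx m' e"
    then obtain k l where "p = (r - e l + k, n - m - m' + l)" "l < m'" "k < e l"
      unfolding global_idx_def by auto
    thus "p \<in> stair_pos n r m m' e" using e_le_r unfolding stair_pos_def by fastforce
  qed
  moreover have "inj_on ?place (global_idx m' e)" unfolding inj_on_def global_idx_def by auto
  ultimately show ?thesis by (simp add: card_image)
qed

locale stair_encoder =
  fixes Crow Ccol :: "'a::field list set" and n r m m' E :: nat and e :: "nat \<Rightarrow> nat"
  assumes mds_row: "mds_code (n + m') (n - m) Crow"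
    and mds_col: "mds_code (r + E) r Ccol"
    and e_le: "\<And>l. l < m' \<Longrightarrow> e l \<le> E"
begin

definition row_enc :: "(nat \<times> nat \<Rightarrow> 'a) \<Rightarrow> nat \<Rightarrow> nat \<Rightarrow> 'a" where
  "row_enc U i = sys_enc Crow (n + m') (n - m) (\<lambda>j. U (i, j))"

definition global_par :: "(nat \<times> nat \<Rightarrow> 'a) \<Rightarrow> nat \<Rightarrow> nat \<Rightarrow> 'a" where
  "global_par U l = sys_enc Ccol (r + E) r (\<lambda>i. row_enc U i (n + l))"

definition to_array :: "(nat \<times> nat \<Rightarrow> 'a) \<Rightarrow> 'a mat" where
  "to_array U = mat r n (\<lambda>(i, j). row_enc U i j)"

definition data_box :: "(nat \<times> nat) set" where
  "data_box = {0..<r} \<times> {0..<n - m}"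

lemma row_enc_systematic: "j < n - m \<Longrightarrow> row_enc U i j = U (i, j)"
  unfolding row_enc_def by (rule sys_enc_systematic[OF mds_row]) simp_all

lemma to_array_in_stair_code:
  assumes zero: "\<And>l k. l < m' \<Longrightarrow> k < e l \<Longrightarrow> global_par U l (r + k) = 0"
  shows "to_array U \<in> stair_code Crow Ccol n r m' e"
proof -
  define P where "P = mat r m' (\<lambda>(i, l). row_enc U i (n + l))"
  have S_iff: "Z \<in> stair_code Crow Ccol n r m' e \<longleftrightarrow> Z \<in> carrier_mat r n \<and>
    (\<exists>P\<in>carrier_mat r m'. (\<forall>i<r. is_codeword Crow (n + m') (ext_row n Z P i)) \<and>
       (\<forall>l<m'. \<forall>k<e l. sys_enc Ccol (r + E) r (\<lambda>i. P $$ (i, l)) (r + k) = 0))" for Z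
    by (rule stair_code_iff[OF mds_col]) (rule e_le)
  have rows: "is_codeword Crow (n + m') (ext_row n (to_array U) P i)" if i: "i < r" for i
  proof (rule is_codeword_cong[OF sys_enc_codeword[OF mds_row]])
    show "n - m \<le> n + m'" by simp
    fix j assume "j < n + m'"
    thus "sys_enc Crow (n + m') (n - m) (\<lambda>j. U (i, j)) j = ext_row n (to_array U) P i j"
      using i unfolding ext_row_def to_array_def P_def row_enc_def by auto
  qed
  have "sys_enc Ccol (r + E) r (\<lambda>i. P $$ (i, l)) = global_par U l" if "l < m'" for l
    unfolding global_par_def by (rule sys_enc_cong) (use that in \<open>simp add: P_def\<close>)
  hence "\<forall>l<m'. \<forall>k<e l. sys_enc Ccol (r + E) r (\<lambda>i. P $$ (i, l)) (r + k) = 0"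
    using zero by simp
  moreover have "to_array U \<in> carrier_mat r n" "P \<in> carrier_mat r m'"
    unfolding to_array_def P_def by simp_all
  ultimately show ?thesis using rows S_iff by blast
qed

lemma to_array_inj: "inj_on to_array (data_box \<rightarrow>\<^sub>E UNIV)"
proof
  fix U U' assume U: "U \<in> data_box \<rightarrow>\<^sub>E UNIV" and U': "U' \<in> data_box \<rightarrow>\<^sub>E UNIV"
    and eq: "to_array U = to_array U'"
  show "U = U'"
  proof (rule extensionalityI[of _ data_box])
    show "U \<in> extensional data_box" "U' \<in> extensional data_box" using U U' by (auto simp: PiE_iff)
    fix p assume "p \<in> data_box"
    then obtain i j where ij: "p = (i, j)" "i < r" "j < n - m" unfolding data_box_def by auto
    have "U (i, j) = to_array U $$ (i, j)" using ij by (simp add: to_array_def row_enc_systematic)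
    also have "\<dots> = U' (i, j)" using ij eq by (simp add: to_array_def row_enc_systematic)
    finally show "U p = U' p" using ij(1) by simp
  qed
qed

text \<open>Both encoding steps are linear, hence so are the global parities.\<close>

lemma global_par_diff:
  assumes l: "l < m'" and q: "q < r + E"
  shows "global_par (\<lambda>p. U p - U' p) l q = global_par U l q - global_par U' l q"
proof -
  have row: "row_enc (\<lambda>p. U p - U' p) i (n + l) = row_enc U i (n + l) - row_enc U' i (n + l)" for i
    unfolding row_enc_def by (rule sys_enc_diff[OF mds_row]) (use l in simp_all)
  show ?thesis
    unfolding global_par_def row by (rule sys_enc_diff[OF mds_col _ q]) simp
qed

lemma global_par_cong:
  assumes "\<And>i j. i < r \<Longrightarrow> j < n - m \<Longrightarrow> U (i, j) = U' (i, j)"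
  shows "global_par U = global_par U'"
proof -
  have "row_enc U i = row_enc U' i" if "i < r" for i
    unfolding row_enc_def by (rule sys_enc_cong) (use assms that in simp)
  thus ?thesis unfolding global_par_def by (intro ext sys_enc_cong) simp
qed

text \<open>The global parities give a linear map from the \<open>|data_box|\<close> row data symbols to the
  \<open>|global_idx|\<close> outside global parities; arrays in its kernel encode to distinct STAIR
  codewords.\<close>

lemma card_data_box_le:
  assumes fin: "finite (UNIV :: 'a set)" and finS: "finite (stair_code Crow Ccol n r m' e)"
  shows "card (UNIV :: 'a set) ^ card data_box
    \<le> card (stair_code Crow Ccol n r m' e) * card (UNIV :: 'a set) ^ card (global_idx m' e)"
proof -
  define V where "V = data_box \<rightarrow>\<^sub>E (UNIV :: 'a set)"
  define B where "B = global_idx m' e \<rightarrow>\<^sub>E (UNIV :: 'a set)"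
  define glob where "glob U = restrict (\<lambda>(k, l). global_par U l (r + k)) (global_idx m' e)" for U
  define Ker where "Ker = {U\<in>V. glob U = restrict (\<lambda>_. 0) (global_idx m' e)}"
  have fin_box: "finite data_box" unfolding data_box_def by simp
  have fin_idx: "finite (global_idx m' e)"
  proof (rule finite_subset[of _ "{..<E} \<times> {..<m'}"])
    show "global_idx m' e \<subseteq> {..<E} \<times> {..<m'}"
      unfolding global_idx_def using e_le by (fastforce intro: less_le_trans)
  qed simp
  have finV: "finite V" unfolding V_def using fin_box fin by (simp add: finite_PiE)
  have "card (UNIV :: 'a set) ^ card data_box = card V"
    unfolding V_def by (rule card_funcsetE[OF fin_box, symmetric])
  also have "card V \<le> card B * card Ker"
  proof (rule card_le_fibres[where psi = glob])
    show "finite V" "finite Ker" using finV unfolding Ker_def by simp_all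
    show "finite B" unfolding B_def using fin_idx fin by (simp add: finite_PiE)
    show "glob ` V \<subseteq> B" unfolding glob_def B_def by auto
    fix U0 assume U0: "U0 \<in> V"
    define h where "h U = restrict (\<lambda>p. U p - U0 p) data_box" for U
    have "inj_on h {U\<in>V. glob U = glob U0}"
    proof
      fix U U' assume "U \<in> {U\<in>V. glob U = glob U0}" "U' \<in> {U\<in>V. glob U = glob U0}"
        and eq: "h U = h U'"
      hence "U \<in> extensional data_box" "U' \<in> extensional data_box" unfolding V_def by (auto simp: PiE_iff)
      moreover have "U p = U' p" if "p \<in> data_box" for p
        using fun_cong[OF eq, of p] that unfolding h_def by simp
      ultimately show "U = U'" by (rule extensionalityI)
    qed
    moreover have "h U \<in> Ker" if "U \<in> V" "glob U = glob U0" for U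
    proof -
      have "global_par (h U) = global_par (\<lambda>p. U p - U0 p)"
        by (rule global_par_cong) (simp add: h_def data_box_def)
      moreover have "global_par (\<lambda>p. U p - U0 p) l (r + k) = 0" if "(k, l) \<in> global_idx m' e" for k l
      proof -
        have kl: "l < m'" "k < e l" using that unfolding global_idx_def by auto
        hence "r + k < r + E" using e_le[of l] by simp
        moreover have "global_par U l (r + k) = global_par U0 l (r + k)"
          using that fun_cong[OF \<open>glob U = glob U0\<close>, of "(k, l)"] unfolding glob_def by simp
        ultimately show ?thesis using global_par_diff[OF kl(1)] by simp
      qed
      ultimately have "global_par (h U) l (r + k) = 0" if "(k, l) \<in> global_idx m' e" for k l
        using that by simp
      moreover have "h U \<in> V" unfolding h_def V_def by simp
      ultimately show ?thesis unfolding Ker_def glob_def by (auto simp: restrict_def)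
    qed
    ultimately show "\<exists>h. inj_on h {U\<in>V. glob U = glob U0} \<and> h ` {U\<in>V. glob U = glob U0} \<subseteq> Ker"
      by blast
  qed
  also have "card B = card (UNIV :: 'a set) ^ card (global_idx m' e)"
    unfolding B_def by (rule card_funcsetE[OF fin_idx])
  also have "card Ker \<le> card (stair_code Crow Ccol n r m' e)"
  proof -
    have "to_array ` Ker \<subseteq> stair_code Crow Ccol n r m' e"
    proof clarify
      fix U assume "U \<in> Ker"
      hence eq: "glob U = restrict (\<lambda>_. 0) (global_idx m' e)" unfolding Ker_def by simp
      have "global_par U l (r + k) = 0" if "l < m'" "k < e l" for l k
        using that fun_cong[OF eq, of "(k, l)"] unfolding glob_def global_idx_def by simp
      thus "to_array U \<in> stair_code Crow Ccol n r m' e" by (rule to_array_in_stair_code)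
    qed
    moreover have "inj_on to_array Ker"
      by (rule inj_on_subset[OF to_array_inj]) (auto simp: Ker_def V_def)
    ultimately show ?thesis using card_inj_on_le[OF _ _ finS] by blast
  qed
  finally show ?thesis by (simp add: mult.commute)
qed

end

text \<open>Part (a): the data map is injective (\<open>stair_data_inj\<close>), and by counting it is onto, since
  \<open>|S| \<ge> q^(|data_box| - |stair|)\<close> is exactly the number of data assignments.\<close>

lemma stair_data_bij:
  fixes Crow Ccol :: "'a::{field,finite} list set"
  assumes mds_row: "mds_code (n + m') (n - m) Crow" and mds_col: "mds_code (r + E) r Ccol"
    and e_le: "\<And>l. l < m' \<Longrightarrow> e l \<le> E" and e_le_r: "\<And>l. l < m' \<Longrightarrow> e l \<le> r"
    and m'_le: "m' \<le> n - m"
  shows "bij_betw (\<lambda>X. restrict (\<lambda>p. X $$ p) (data_pos n r m m' e))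
           (stair_code Crow Ccol n r m' e) (data_pos n r m m' e \<rightarrow>\<^sub>E UNIV)"
proof -
  interpret stair_encoder Crow Ccol n r m m' E e
    by (rule stair_encoder.intro[OF mds_row mds_col]) (rule e_le)
  define S where "S = stair_code Crow Ccol n r m' e"
  define dmap where "dmap X = restrict (\<lambda>p. X $$ p) (data_pos n r m m' e)" for X :: "'a mat"
  define T where "T = data_pos n r m m' e \<rightarrow>\<^sub>E (UNIV :: 'a set)"
  define q where "q = card (UNIV :: 'a set)"
  have inj: "inj_on dmap S"
    unfolding dmap_def S_def by (rule stair_data_inj[OF mds_row mds_col e_le])
  have stair_box: "stair_pos n r m m' e \<subseteq> data_box"
    unfolding stair_pos_def data_box_def using m'_le by auto
  have fin_box: "finite data_box" unfolding data_box_def by simp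
  have data_pos: "data_pos n r m m' e = data_box - stair_pos n r m m' e"
    unfolding data_pos_def data_box_def by auto
  have "finite (data_pos n r m m' e)" unfolding data_pos using fin_box by simp
  hence finT: "finite T" and cardT: "card T = q ^ (card data_box - card (stair_pos n r m m' e))"
    unfolding T_def q_def data_pos
    using card_Diff_subset[OF finite_subset[OF stair_box fin_box] stair_box]
    by (simp_all add: finite_PiE card_funcsetE)
  have img: "dmap ` S \<subseteq> T" unfolding dmap_def T_def by auto
  have finS: "finite S" using finite_imageD[OF finite_subset[OF img finT] inj] .
  have "q ^ (card data_box - card (stair_pos n r m m' e)) * q ^ card (stair_pos n r m m' e)
      = q ^ card data_box"
    using card_mono[OF fin_box stair_box] by (simp add: power_add[symmetric])
  also have "\<dots> \<le> card S * q ^ card (stair_pos n r m m' e)"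
    using card_data_box_le[OF finite_UNIV] finS card_stair_pos[OF e_le_r]
    unfolding S_def q_def by simp
  finally have "card T \<le> card S" using cardT q_def by (simp add: card_gt_0_iff)
  hence "dmap ` S = T" using card_seteq[OF finT img] card_image[OF inj] by simp
  thus ?thesis using inj unfolding bij_betw_def dmap_def S_def T_def by simp
qed

theorem mainTheorem3:
  fixes Crow Ccol :: "'a::{field,finite} list set"
    and n r m m' w :: nat and e :: "nat \<Rightarrow> nat"
  assumes card_field: "card (UNIV :: 'a set) = 2 ^ w"
    and "1 \<le> m" "m < n" "1 \<le> m'" "m' \<le> n - m"
    and "0 < e 0" "\<forall>l1 l2. l1 \<le> l2 \<and> l2 < m' \<longrightarrow> e l1 \<le> e l2" "e (m' - 1) \<le> r"
    and "n + m' \<le> 2 ^ w" "r + e (m' - 1) \<le> 2 ^ w"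
    and "mds_code (n + m') (n - m) Crow"
    and "mds_code (r + e (m' - 1)) r Ccol"
  shows
    "bij_betw (\<lambda>X. restrict (\<lambda>p. X $$ p) (data_pos n r m m' e))
        (stair_code Crow Ccol n r m' e) (data_pos n r m m' e \<rightarrow>\<^sub>E UNIV)
     \<and>
     (\<forall>F L. F \<subseteq> {0..<n} \<and> card F \<le> m \<and>
        (\<forall>j<n. j \<notin> F \<longrightarrow> L j \<subseteq> {0..<r}) \<and>
        card {j. j < n \<and> j \<notin> F \<and> L j \<noteq> {}} \<le> m' \<and>
        (let J = {j. j < n \<and> j \<notin> F \<and> L j \<noteq> {}};
             t = card J;
             fs = sort (map (\<lambda>j. card (L j)) (sorted_list_of_set J))
         in \<forall>i<t. fs ! (t - 1 - i) \<le> e (m' - 1 - i))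
      \<longrightarrow> (\<forall>X\<in>stair_code Crow Ccol n r m' e. \<forall>Y\<in>stair_code Crow Ccol n r m' e.
            (\<forall>j<n. j \<notin> F \<longrightarrow> (\<forall>i<r. i \<notin> L j \<longrightarrow> X $$ (i, j) = Y $$ (i, j)))
            \<longrightarrow> X = Y))"
proof -
  define E where "E = e (m' - 1)"
  have mds_row: "mds_code (n + m') (n - m) Crow"
    and mds_col: "mds_code (r + E) r Ccol" using assms unfolding E_def by simp_all
  have e_le: "e l \<le> E" if "l < m'" for l using assms(7) that unfolding E_def by simp
  have e_le_r: "e l \<le> r" if "l < m'" for l using e_le[OF that] assms(8) unfolding E_def by simp
  show ?thesis
  proof (intro conjI allI impI ballI, goal_cases)
    case 1
    show ?case by (rule stair_data_bij[OF mds_row mds_col e_le e_le_r assms(5)])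
  next
    case (2 F L X Y)
    then show ?case by (elim conjE) (rule stair_code_erasure_tolerance[OF mds_row mds_col e_le])
  qed
qed

end
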